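(* Let $n\ge 2$ and $1\le k\le n-1$. Suppose $F$ is absolutely continuous, $h$ is continuous on $[l_F,r_F]$, and $h^{(k)}$ is continuous on $(l_F,r_F)$. Assume that for every $v\in(l_F,r_F)$ the quantity ${}_0M_k(l_F,v)=\frac{\partial^k}{\partial v^k}\frac{h(v)-h(l_F)}{v-l_F}$ is nonzero. Then \[ E[h^{(k)}(X(n))\mid X(n-k)=u,\ X(n+1)=v]=k\,{}_0M_{k-1}(u,v)\qquad\text{for all } l_F<u<v<r_F \] holds if and only if $l_F>-\infty$, $r_F=\infty$ and $F(x)=1-e^{-c(x-l_F)}$ for $x\ge l_F$, for some constant $c>0$.
   Context: $X_1,X_2,\dots$ are i.i.d. copies of a random variable $X$ with distribution function $F$; $l_F=\inf\{x:F(x)>0\}$, $r_F=\sup\{x:F(x)<1\}$. Upper record times: $L(1)=1$, $L(m)=\min\{j>L(m-1): X_j>X_{L(m-1)}\}$; upper record values $X(m)=X_{L(m)}$. Let $R(x)=-\ln(1-F(x))$. Conditional expectations given $X(n-k)=u$, $X(n+r)=v$ ($1\le k\le n-1$, $r\ge1$, $u<v$) are taken with respect to the conditional density of $X(n)$ \[ t\mapsto \frac{(k+r-1)!}{(k-1)!(r-1)!}\Big[\tfrac{R(t)-R(u)}{R(v)-R(u)}\Big]^{k-1}\Big[\tfrac{R(v)-R(t)}{R(v)-R(u)}\Big]^{r-1}\frac{R'(t)}{R(v)-R(u)},\quad u<t<v. \] For a function $h$ set $M(u,v)=\frac{h(v)-h(u)}{v-u}$ ($u\ne v$) and ${}_iM_j(u,v)=\frac{\partial^{i+j}}{\partial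 u^i\partial v^j}M(u,v)$; ${}_iM={}_iM_0$, $M_j={}_0M_j$. *)

theory Defs
  imports "HOL-Probability.Probability"
begin

definition lF :: "(real \<Rightarrow> real) \<Rightarrow> ereal" where
  "lF F = Inf (ereal ` {x. F x > 0})"

definition rF :: "(real \<Rightarrow> real) \<Rightarrow> ereal" where
  "rF F = Sup (ereal ` {x. F x < 1})"

definition Rfun :: "(real \<Rightarrow> real) \<Rightarrow> real \<Rightarrow> real" where
  "Rfun F x = - ln (1 - F x)"

definition Mq :: "(real \<Rightarrow> real) \<Rightarrow> real \<Rightarrow> real \<Rightarrow> real" where
  "Mq h u v = (h v - h u) / (v - u)"

definition Mj :: "(real \<Rightarrow> real) \<Rightarrow> nat \<Rightarrow> real \<Rightarrow> real \<Rightarrow> real" where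
  "Mj h j u v = (deriv ^^ j) (\<lambda>w. Mq h u w) v"

(* conditional density of X(n) given X(n-k)=u, X(n+r)=v *)
definition rec_cond_density ::
  "(real \<Rightarrow> real) \<Rightarrow> nat \<Rightarrow> nat \<Rightarrow> real \<Rightarrow> real \<Rightarrow> real \<Rightarrow> real" where
  "rec_cond_density F k r u v t =
     fact (k + r - 1) / (fact (k - 1) * fact (r - 1))
     * ((Rfun F t - Rfun F u) / (Rfun F v - Rfun F u)) ^ (k - 1)
     * ((Rfun F v - Rfun F t) / (Rfun F v - Rfun F u)) ^ (r - 1)
     * deriv (Rfun F) t / (Rfun F v - Rfun F u)"

(* E[g(X(n)) | X(n-k)=u, X(n+r)=v] *)
definition rec_cond_exp ::
  "(real \<Rightarrow> real) \<Rightarrow> (real \<Rightarrow> real) \<Rightarrow> nat \<Rightarrow> nat \<Rightarrow> real \<Rightarrow> real \<Rightarrow> real" where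
  "rec_cond_exp F g k r u v = integral {u..v} (\<lambda>t. g t * rec_cond_density F k r u v t)"

end

theory Submission
  imports Defs
begin

(* Let R = -ln(1 - F) be the cumulative hazard and l the (finite) left end point of the
   support.  The v-derivatives of M(u,v) = (h v - h u)/(v - u) have a closed form (dquot),
   and d/dv [(v - u)^k M_(k-1)(u,v)] = h^(k)(v) (v - u)^(k-1).  With the conditional density
   of X(n), the regression identity becomes
     int_u^v h^(k)(t) (R t - R u)^(k-1) dR(t) = (R v - R u)^k M_(k-1)(u,v).
   If F is exponential then R is linear and this is the fundamental theorem of calculus.
   Conversely, differentiating in v at Lebesgue points of the density gives
   R'(v) = (R v - R p)/(v - p) for rational p near l, hence R'(v) = R v/(v - l) almost
   everywhere; as F is an indefinite integral this holds everywhere, R v/(v - l) is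
   constant and F is exponential. *)

(* dquot H u j w is the j-th derivative in w of (H 0 w - H 0 u)/(w - u), written through
   the derivatives H 0, ..., H j of the numerator; it is the closed form of M_j(u,w). *)
fun dquot :: "(nat \<Rightarrow> real \<Rightarrow> real) \<Rightarrow> real \<Rightarrow> nat \<Rightarrow> real \<Rightarrow> real" where
  "dquot H u 0 w = (H 0 w - H 0 u) / (w - u)"
| "dquot H u (Suc j) w = (H (Suc j) w - real (Suc j) * dquot H u j w) / (w - u)"

lemma has_derivative_over_linear:
  assumes "(N has_real_derivative N') (at w)" and "w \<noteq> u"
  shows "((\<lambda>w. N w / (w - u)) has_real_derivative (N' - N w / (w - u)) / (w - u)) (at w)"
proof -
  have "((\<lambda>w. N w / (w - u)) has_real_derivative (N' * (w - u) - N w * 1) / ((w - u) * (w - u))) (at w)"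
    by (rule DERIV_divide[OF assms(1)]) (auto intro!: derivative_eq_intros simp: assms(2))
  then show ?thesis
    by (rule DERIV_cong) (use assms(2) in \<open>simp add: field_simps\<close>)
qed

lemma dquot_has_derivative:
  assumes "\<And>i. i \<le> j \<Longrightarrow> (H i has_real_derivative H (Suc i) w) (at w)" and "w \<noteq> u"
  shows "(dquot H u j has_real_derivative dquot H u (Suc j) w) (at w)"
  using assms(1)
proof (induction j)
  case 0
  have "((\<lambda>w. H 0 w - H 0 u) has_real_derivative H 1 w - 0) (at w)"
    using "0.prems"[of 0] by (intro DERIV_diff DERIV_const) simp
  from has_derivative_over_linear[OF this \<open>w \<noteq> u\<close>] show ?case
    by (simp add: fun_eq_iff)
next
  case (Suc j)
  have "((\<lambda>w. H (Suc j) w - real (Suc j) * dquot H u j w) has_real_derivative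
          H (Suc (Suc j)) w - real (Suc j) * dquot H u (Suc j) w) (at w)"
    using Suc by (intro DERIV_diff DERIV_cmult) auto
  from has_derivative_over_linear[OF this \<open>w \<noteq> u\<close>]
  have "(dquot H u (Suc j) has_real_derivative
          (H (Suc (Suc j)) w - real (Suc j) * dquot H u (Suc j) w - dquot H u (Suc j) w) / (w - u)) (at w)"
    by (simp only: dquot.simps(2)[symmetric])
  then show ?case
    by (rule DERIV_cong) (simp only: dquot.simps(2)[of H u "Suc j"], simp add: algebra_simps del: dquot.simps)
qed

lemma Mj_eq_dquot:
  assumes "\<forall>i<k. \<forall>x\<in>S. ((deriv ^^ i) h has_real_derivative (deriv ^^ Suc i) h x) (at x)"
    and "open S" and "u \<notin> S" and "j \<le> k" and "w \<in> S"
  shows "Mj h j u w = dquot (\<lambda>i. (deriv ^^ i) h) u j w"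
  using assms(4,5)
proof (induction j arbitrary: w)
  case 0
  then show ?case by (simp add: Mj_def Mq_def)
next
  case (Suc j)
  have "(dquot (\<lambda>i. (deriv ^^ i) h) u j has_real_derivative
          dquot (\<lambda>i. (deriv ^^ i) h) u (Suc j) w) (at w)"
    using Suc.prems assms(1,3) by (intro dquot_has_derivative) auto
  then have "((deriv ^^ j) (\<lambda>w. Mq h u w) has_real_derivative
          dquot (\<lambda>i. (deriv ^^ i) h) u (Suc j) w) (at w)"
    by (rule has_field_derivative_transform_within_open[OF _ \<open>open S\<close> \<open>w \<in> S\<close>])
       (use Suc in \<open>auto simp: Mj_def\<close>)
  then show ?case unfolding Mj_def by (simp add: DERIV_imp_deriv)
qed

(* Continuity of the closed form in the left point u, needed to pass to u = l. *)
lemma dquot_tendsto_left_point: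
  assumes "(H 0 \<longlongrightarrow> H 0 l) (at_right l)" and "v \<noteq> l"
  shows "((\<lambda>u. dquot H u j v) \<longlongrightarrow> dquot H l j v) (at_right l)"
  by (induction j) (use assms in \<open>auto intro!: tendsto_intros\<close>)

(* (w - u)^(j+1) M_j(u,w) is a polynomial combination of H 0, ..., H j vanishing at w = u. *)
lemma dquot_weighted_tendsto_0:
  assumes "\<And>i. i \<le> j \<Longrightarrow> (H i \<longlongrightarrow> H i u) (at_right u)"
  shows "((\<lambda>w. (w - u) ^ Suc j * dquot H u j w) \<longlongrightarrow> 0) (at_right u)"
  using assms
proof (induction j)
  case 0
  have "((\<lambda>w. H 0 w - H 0 u) \<longlongrightarrow> H 0 u - H 0 u) (at_right u)"
    using "0.prems"[of 0] by (intro tendsto_intros) auto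
  moreover have "\<forall>\<^sub>F w in at_right u. H 0 w - H 0 u = (w - u) ^ Suc 0 * dquot H u 0 w"
    using eventually_at_right_less[of u] by eventually_elim simp
  ultimately show ?case by (auto intro: Lim_transform_eventually)
next
  case (Suc j)
  have "((\<lambda>w. (w - u) ^ Suc j * H (Suc j) w - real (Suc j) * ((w - u) ^ Suc j * dquot H u j w))
     \<longlongrightarrow> (u - u) ^ Suc j * H (Suc j) u - real (Suc j) * 0) (at_right u)"
    using Suc by (intro tendsto_intros) auto
  moreover have "\<forall>\<^sub>F w in at_right u. (w - u) ^ Suc j * H (Suc j) w
      - real (Suc j) * ((w - u) ^ Suc j * dquot H u j w) = (w - u) ^ Suc (Suc j) * dquot H u (Suc j) w"
    using eventually_at_right_less[of u] by eventually_elim (simp add: field_simps)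
  ultimately show ?case by (auto intro: Lim_transform_eventually)
qed

lemma dquot_step:
  assumes "w \<noteq> u" and "1 \<le> k"
  shows "H k w = (w - u) * dquot H u k w + real k * dquot H u (k - 1) w"
  using assms by (cases k) (simp_all add: field_simps)

lemma weighted_dquot_has_derivative:
  assumes k: "1 \<le> k" and "w \<noteq> u"
    and H: "\<And>j. j < k \<Longrightarrow> (H j has_real_derivative H (Suc j) w) (at w)"
  shows "((\<lambda>w. (w - u) ^ k * dquot H u (k - 1) w) has_real_derivative H k w * (w - u) ^ (k - 1)) (at w)"
proof -
  have km: "Suc (k - 1) = k" using k by simp
  have "(dquot H u (k - 1) has_real_derivative dquot H u (Suc (k - 1)) w) (at w)"
    using k \<open>w \<noteq> u\<close> by (intro dquot_has_derivative H) auto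
  then have dq: "(dquot H u (k - 1) has_real_derivative dquot H u k w) (at w)"
    by (simp only: km)
  have p: "((\<lambda>w. (w - u) ^ k) has_real_derivative real k * (w - u) ^ (k - 1) * 1) (at w)"
    using DERIV_power[OF DERIV_diff[OF DERIV_ident DERIV_const], where n=k] by simp
  have pow: "(w - u) ^ k = (w - u) ^ (k - 1) * (w - u)"
    by (metis km power_Suc2)
  have "real k * (w - u) ^ (k - 1) * 1 * dquot H u (k - 1) w + dquot H u k w * (w - u) ^ k
      = (w - u) ^ (k - 1) * ((w - u) * dquot H u k w + real k * dquot H u (k - 1) w)"
    unfolding pow by (simp add: algebra_simps)
  also have "\<dots> = H k w * (w - u) ^ (k - 1)"
    using dquot_step[OF \<open>w \<noteq> u\<close> k, of H] by simp
  finally show ?thesis using DERIV_mult[OF p dq] by simp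
qed

lemma weighted_dquot_continuous_on:
  assumes k: "1 \<le> k" and uv: "u < v"
    and H: "\<And>j x. j < k \<Longrightarrow> x \<in> {u..v} \<Longrightarrow> (H j has_real_derivative H (Suc j) x) (at x)"
  shows "continuous_on {u..v} (\<lambda>w. (w - u) ^ k * dquot H u (k - 1) w)"
  unfolding continuous_on_eq_continuous_within
proof
  fix w assume w: "w \<in> {u..v}"
  show "continuous (at w within {u..v}) (\<lambda>w. (w - u) ^ k * dquot H u (k - 1) w)"
  proof (cases "w = u")
    case True
    have "(H i \<longlongrightarrow> H i u) (at_right u)" if "i \<le> k - 1" for i
    proof -
      have "isCont (H i) u" by (rule DERIV_isCont[OF H]) (use that k uv in auto)
      then show ?thesis by (simp add: isCont_def filterlim_at_split)
    qed
    then have "((\<lambda>w. (w - u) ^ Suc (k - 1) * dquot H u (k - 1) w) \<longlongrightarrow> 0) (at_right u)"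
      by (rule dquot_weighted_tendsto_0)
    then show ?thesis using True uv k by (simp add: continuous_within at_within_Icc_at_right power_0_left)
  next
    case False
    then have "isCont (\<lambda>w. (w - u) ^ k * dquot H u (k - 1) w) w"
      using w by (intro DERIV_isCont[OF weighted_dquot_has_derivative[OF k False]] H) auto
    then show ?thesis by (rule continuous_at_imp_continuous_within)
  qed
qed

lemma integral_power_weight_dquot:
  assumes k: "1 \<le> k" and uv: "u < v"
    and H: "\<And>j x. j < k \<Longrightarrow> x \<in> {u..v} \<Longrightarrow> (H j has_real_derivative H (Suc j) x) (at x)"
  shows "((\<lambda>t. H k t * (t - u) ^ (k - 1)) has_integral (v - u) ^ k * dquot H u (k - 1) v) {u..v}"
proof -
  have "((\<lambda>t. H k t * (t - u) ^ (k - 1)) has_integral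
      (v - u) ^ k * dquot H u (k - 1) v - (u - u) ^ k * dquot H u (k - 1) u) {u..v}"
  proof (rule fundamental_theorem_of_calculus_interior)
    show "continuous_on {u..v} (\<lambda>w. (w - u) ^ k * dquot H u (k - 1) w)"
      using k uv H by (rule weighted_dquot_continuous_on)
    fix w assume "w \<in> {u<..<v}"
    then show "((\<lambda>w. (w - u) ^ k * dquot H u (k - 1) w) has_vector_derivative H k w * (w - u) ^ (k - 1)) (at w)"
      unfolding has_real_derivative_iff_has_vector_derivative[symmetric]
      by (intro weighted_dquot_has_derivative k H) auto
  qed (use uv in simp)
  then show ?thesis using k by (simp add: power_0_left)
qed

lemma integral_right_quotient_ae:
  fixes g :: "real \<Rightarrow> real"
  assumes g: "\<And>a b. g integrable_on {a..b}"
  obtains N where "negligible N"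
    "\<And>x e. x \<notin> N \<Longrightarrow> 0 < e \<Longrightarrow>
       \<exists>d>0. \<forall>y. x < y \<and> y < x + d \<longrightarrow> \<bar>integral {x..y} g / (y - x) - g x\<bar> < e"
proof -
  have "\<And>a b::real. g integrable_on cbox a b" using g by simp
  then obtain N where N: "negligible N"
    "\<And>x e. x \<notin> N \<Longrightarrow> 0 < e \<Longrightarrow> \<exists>d>0. \<forall>h. 0 < h \<and> h < d \<longrightarrow>
          norm (integral (cbox x (x + h *\<^sub>R One)) g /\<^sub>R h ^ DIM(real) - g x) < e"
    by (rule integrable_ccontinuous_explicit) blast
  show ?thesis
  proof (rule that[OF N(1)])
    fix x e :: real assume "x \<notin> N" "0 < e"
    then obtain d where "d > 0"
      and d: "\<And>h. 0 < h \<Longrightarrow> h < d \<Longrightarrow> \<bar>integral {x..x + h} g / h - g x\<bar> < e"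
      using N(2)[OF \<open>x \<notin> N\<close> \<open>0 < e\<close>] by (auto simp: divide_inverse_commute)
    have "\<bar>integral {x..y} g / (y - x) - g x\<bar> < e" if "x < y" "y < x + d" for y
      using d[of "y - x"] that by simp
    with \<open>d > 0\<close> show "\<exists>d>0. \<forall>y. x < y \<and> y < x + d \<longrightarrow> \<bar>integral {x..y} g / (y - x) - g x\<bar> < e"
      by blast
  qed
qed

(* Left quotients, obtained from the right ones by reflecting the integrand. *)
lemma integral_left_quotient_ae:
  fixes g :: "real \<Rightarrow> real"
  assumes g: "\<And>a b. g integrable_on {a..b}"
  obtains N where "negligible N"
    "\<And>x e. x \<notin> N \<Longrightarrow> 0 < e \<Longrightarrow>
       \<exists>d>0. \<forall>y. y < x \<and> x - d < y \<longrightarrow> \<bar>integral {y..x} g / (x - y) - g x\<bar> < e"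
proof -
  have reflect: "(\<lambda>x. g (- x)) integrable_on {- b .. - a}" for a b
    unfolding Henstock_Kurzweil_Integration.integrable_reflect_real by (rule g)
  have "(\<lambda>x. g (- x)) integrable_on {a..b}" for a b
    using reflect[of "- a" "- b"] by simp
  then obtain N where N: "negligible N"
    "\<And>x e. x \<notin> N \<Longrightarrow> 0 < e \<Longrightarrow> \<exists>d>0. \<forall>y. x < y \<and> y < x + d \<longrightarrow>
       \<bar>integral {x..y} (\<lambda>x. g (- x)) / (y - x) - g (- x)\<bar> < e"
    by (rule integral_right_quotient_ae) blast
  have "negligible (uminus ` N)"
    by (intro negligible_differentiable_image_negligible N(1))
       (auto intro!: derivative_intros simp: differentiable_on_def)
  then show ?thesis
  proof (rule that)
    fix x e :: real assume "x \<notin> uminus ` N" "0 < e"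
    then have "- x \<notin> N" by (metis image_eqI minus_minus)
    then obtain d where "d > 0" and d: "\<forall>y. - x < y \<and> y < - x + d \<longrightarrow>
        \<bar>integral {- x..y} (\<lambda>x. g (- x)) / (y - (- x)) - g (- (- x))\<bar> < e"
      using N(2) \<open>0 < e\<close> by blast
    have "\<bar>integral {y..x} g / (x - y) - g x\<bar> < e" if "y < x" "x - d < y" for y
      using d[rule_format, of "- y"] that by (simp add: add.commute)
    with \<open>d > 0\<close> show "\<exists>d>0. \<forall>y. y < x \<and> x - d < y \<longrightarrow> \<bar>integral {y..x} g / (x - y) - g x\<bar> < e"
      by blast
  qed
qed

lemma integral_difference_quotient:
  fixes g :: "real \<Rightarrow> real"
  assumes g: "\<And>a b. g integrable_on {a..b}" and "a < x" "a < y" "y \<noteq> x"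
  shows "(integral {a..y} g - integral {a..x} g) / (y - x) =
    (if x < y then integral {x..y} g / (y - x) else integral {y..x} g / (x - y))"
proof (cases "x < y")
  case True
  have "integral {a..x} g + integral {x..y} g = integral {a..y} g"
    by (rule Henstock_Kurzweil_Integration.integral_combine) (use True assms in auto)
  then show ?thesis using True by simp
next
  case False
  have "integral {a..y} g + integral {y..x} g = integral {a..x} g"
    by (rule Henstock_Kurzweil_Integration.integral_combine) (use False assms in auto)
  then have "integral {a..y} g - integral {a..x} g = - integral {y..x} g" by simp
  then show ?thesis using False by (simp add: minus_divide_right)
qed

lemma integral_has_derivative_ae:
  fixes g :: "real \<Rightarrow> real"
  assumes g: "\<And>a b. g integrable_on {a..b}"
  obtains N where "negligible N"
    "\<And>x a. x \<notin> N \<Longrightarrow> a < x \<Longrightarrow> ((\<lambda>y. integral {a..y} g) has_real_derivative g x) (at x)"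
proof -
  obtain N1 where N1: "negligible N1"
    "\<And>x e. x \<notin> N1 \<Longrightarrow> 0 < e \<Longrightarrow>
       \<exists>d>0. \<forall>y. x < y \<and> y < x + d \<longrightarrow> \<bar>integral {x..y} g / (y - x) - g x\<bar> < e"
    using integral_right_quotient_ae[OF g] by blast
  obtain N2 where N2: "negligible N2"
    "\<And>x e. x \<notin> N2 \<Longrightarrow> 0 < e \<Longrightarrow>
       \<exists>d>0. \<forall>y. y < x \<and> x - d < y \<longrightarrow> \<bar>integral {y..x} g / (x - y) - g x\<bar> < e"
    using integral_left_quotient_ae[OF g] by blast
  show ?thesis
  proof (rule that[of "N1 \<union> N2"])
    show "negligible (N1 \<union> N2)" using N1(1) N2(1) by (rule negligible_Un)
    fix x a :: real assume x: "x \<notin> N1 \<union> N2" and ax: "a < x"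
    show "((\<lambda>y. integral {a..y} g) has_real_derivative g x) (at x)"
      unfolding has_field_derivative_iff
    proof (rule LIM_I)
      fix e :: real assume "0 < e"
      then obtain d1 d2 where "d1 > 0" "d2 > 0"
        and d1: "\<And>y. x < y \<Longrightarrow> y < x + d1 \<Longrightarrow> \<bar>integral {x..y} g / (y - x) - g x\<bar> < e"
        and d2: "\<And>y. y < x \<Longrightarrow> x - d2 < y \<Longrightarrow> \<bar>integral {y..x} g / (x - y) - g x\<bar> < e"
        using N1(2)[of x e] N2(2)[of x e] x by blast
      have "\<bar>(integral {a..y} g - integral {a..x} g) / (y - x) - g x\<bar> < e"
        if y: "y \<noteq> x" "\<bar>y - x\<bar> < min (min d1 d2) (x - a)" for y
        using integral_difference_quotient[OF g ax, of y] d1[of y] d2[of y] y by auto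
      moreover have "0 < min (min d1 d2) (x - a)" using \<open>d1 > 0\<close> \<open>d2 > 0\<close> ax by simp
      ultimately show "\<exists>s>0. \<forall>y. y \<noteq> x \<and> norm (y - x) < s \<longrightarrow>
          norm ((integral {a..y} g - integral {a..x} g) / (y - x) - g x) < e"
        by (metis real_norm_def)
    qed
  qed
qed

lemma ac_measure_singleton:
  assumes "real_distribution M" and "absolutely_continuous lborel M"
  shows "measure M {x} = 0"
proof -
  have "{x} \<in> null_sets lborel" by (simp add: countable_imp_null_set_lborel)
  then have "{x} \<in> null_sets M" using assms(2) unfolding absolutely_continuous_def by blast
  then show ?thesis by (simp add: measure_def null_sets_def)
qed

lemma ac_cdf_isCont:
  assumes "real_distribution M" and "absolutely_continuous lborel M"
  shows "isCont (cdf M) x"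
proof -
  interpret real_distribution M by (rule assms(1))
  show ?thesis using ac_measure_singleton[OF assms] by (simp add: isCont_cdf)
qed

lemma ac_measure_Icc:
  assumes RD: "real_distribution M" and AC: "absolutely_continuous lborel M" and "a \<le> b"
  shows "measure M {a..b} = cdf M b - cdf M a"
proof (cases "a = b")
  case True then show ?thesis using ac_measure_singleton[OF RD AC] by simp
next
  case False
  interpret real_distribution M by (rule RD)
  have "a < b" using False assms(3) by simp
  then have "{a..b} = {a} \<union> {a<..b}" by auto
  then have "measure M {a..b} = measure M {a} + measure M {a<..b}"
    using finite_measure_Union[of "{a}" "{a<..b}"] by simp
  then show ?thesis using ac_measure_singleton[OF RD AC] cdf_diff_eq[OF \<open>a < b\<close>] by simp
qed

(* Radon-Nikodym: the distribution function is an indefinite integral of a density. *)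
lemma ac_cdf_has_density:
  assumes RD: "real_distribution M" and AC: "absolutely_continuous lborel M"
  obtains g where "\<And>x. g x \<ge> 0"
    "\<And>a b. a \<le> b \<Longrightarrow> (g has_integral (cdf M b - cdf M a)) {a..b}"
proof -
  interpret real_distribution M by (rule RD)
  obtain f where f: "f \<in> borel_measurable lborel" and fM: "density lborel f = M"
    using sigma_finite_measure.Radon_Nikodym[OF sigma_finite_lborel AC] by auto
  have em: "emeasure M A = (\<integral>\<^sup>+x. f x * indicator A x \<partial>lborel)" if "A \<in> sets borel" for A
    using that fM[symmetric] f by (simp add: emeasure_density)
  have "(\<integral>\<^sup>+x. f x \<partial>lborel) \<noteq> \<infinity>"
    using em[of UNIV] emeasure_finite[of UNIV] by simp
  then have "AE x in lborel. f x \<noteq> \<infinity>" by (intro nn_integral_PInf_AE f)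
  then have ae: "AE x in lborel. ennreal (enn2real (f x)) = f x"
    by eventually_elim (simp add: less_top)
  define g where "g x = enn2real (f x)" for x
  have int: "(g has_integral measure M {a..b}) {a..b}" for a b
  proof -
    have "(\<integral>\<^sup>+x. ennreal (g x * indicator {a..b} x) \<partial>lborel) = (\<integral>\<^sup>+x. f x * indicator {a..b} x \<partial>lborel)"
      by (rule nn_integral_cong_AE) (use ae in \<open>eventually_elim, auto simp: g_def indicator_def\<close>)
    also have "\<dots> = ennreal (measure M {a..b})" by (simp add: em[symmetric] emeasure_eq_measure)
    finally have "((\<lambda>x. g x * indicator {a..b} x) has_integral measure M {a..b}) UNIV"
      by (rule nn_integral_has_integral[rotated 2]) (use f in \<open>auto simp: g_def\<close>)
    moreover have "(\<lambda>x. g x * indicator {a..b} x) = (\<lambda>x. if x \<in> {a..b} then g x else 0)"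
      by (auto simp: indicator_def)
    ultimately have "((\<lambda>x. if x \<in> {a..b} then g x else 0) has_integral measure M {a..b}) UNIV"
      by simp
    then show ?thesis using has_integral_restrict_UNIV[of "{a..b}" g] by blast
  qed
  show ?thesis
  proof (rule that)
    show "g x \<ge> 0" for x by (simp add: g_def)
    fix a b :: real assume "a \<le> b"
    show "(g has_integral (cdf M b - cdf M a)) {a..b}"
      by (subst ac_measure_Icc[OF RD AC \<open>a \<le> b\<close>, symmetric]) (rule int)
  qed
qed

lemma cdf_has_derivative_ae:
  assumes "\<And>a b. a \<le> b \<Longrightarrow> (g has_integral (F b - F a)) {a..b}"
  obtains N where "negligible N" "\<And>x. x \<notin> N \<Longrightarrow> (F has_real_derivative g x) (at x)"
proof -
  have "g integrable_on {a..b}" for a b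
    using assms[of a b] by (cases "a \<le> b") auto
  then obtain N where N: "negligible N"
    "\<And>x a. x \<notin> N \<Longrightarrow> a < x \<Longrightarrow> ((\<lambda>y. integral {a..y} g) has_real_derivative g x) (at x)"
    by (rule integral_has_derivative_ae) blast
  show ?thesis
  proof (rule that[OF N(1)])
    fix x assume "x \<notin> N"
    then have "((\<lambda>y. F (x - 1) + integral {x - 1..y} g) has_real_derivative g x) (at x)"
      using DERIV_add[OF DERIV_const N(2)[of x "x - 1"]] by simp
    then show "(F has_real_derivative g x) (at x)"
    proof (rule has_field_derivative_transform_within_open[where S="{x - 1<..}"])
      fix y assume "y \<in> {x - 1<..}"
      then show "F (x - 1) + integral {x - 1..y} g = F y"
        using assms[of "x - 1" y] by (simp add: integral_unique)
    qed auto
  qed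
qed

lemma cdf_pos_right_of_lF:
  assumes "real_distribution M" and "lF (cdf M) < ereal x"
  shows "cdf M x > 0"
proof -
  interpret real_distribution M by (rule assms(1))
  from assms(2) obtain z where "cdf M z > 0" "z < x"
    unfolding lF_def Inf_less_iff by auto
  then show ?thesis using cdf_nondecreasing[of z x] by simp
qed

lemma cdf_zero_left_of_lF:
  assumes "real_distribution M" and "ereal x < lF (cdf M)"
  shows "cdf M x = 0"
proof -
  interpret real_distribution M by (rule assms(1))
  have "\<not> cdf M x > 0"
  proof
    assume "cdf M x > 0"
    then have "lF (cdf M) \<le> ereal x" unfolding lF_def by (intro Inf_lower) auto
    then show False using assms(2) by simp
  qed
  then show ?thesis using cdf_nonneg[of x] by simp
qed

lemma cdf_less_one_left_of_rF:
  assumes "real_distribution M" and "ereal x < rF (cdf M)"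
  shows "cdf M x < 1"
proof -
  interpret real_distribution M by (rule assms(1))
  from assms(2) obtain z where "cdf M z < 1" "x < z"
    unfolding rF_def less_Sup_iff by auto
  then show ?thesis using cdf_nondecreasing[of x z] by simp
qed

lemma cdf_one_right_of_rF:
  assumes "real_distribution M" and "rF (cdf M) < ereal x"
  shows "cdf M x = 1"
proof -
  interpret real_distribution M by (rule assms(1))
  have "\<not> cdf M x < 1"
  proof
    assume "cdf M x < 1"
    then have "ereal x \<le> rF (cdf M)" unfolding rF_def by (intro Sup_upper) auto
    then show False using assms(2) by simp
  qed
  then show ?thesis using cdf_bounded_prob[of x] by simp
qed

lemma ac_cdf_at_lF:
  assumes RD: "real_distribution M" and AC: "absolutely_continuous lborel M"
    and "lF (cdf M) = ereal l"
  shows "cdf M l = 0"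
proof -
  have "(cdf M \<longlongrightarrow> cdf M l) (at_left l)"
    using ac_cdf_isCont[OF RD AC, of l] by (simp add: isCont_def filterlim_at_split)
  moreover have "\<forall>\<^sub>F y in at_left l. cdf M y = 0"
    using eventually_at_left_real[of "l - 1" l] assms(3) cdf_zero_left_of_lF[OF RD]
    by (auto elim!: eventually_mono)
  ultimately have "((\<lambda>y. 0) \<longlongrightarrow> cdf M l) (at_left l)"
    by (rule Lim_transform_eventually)
  then show ?thesis
    by (rule tendsto_unique[OF trivial_limit_at_left_real tendsto_const, symmetric])
qed

lemma ac_cdf_at_rF:
  assumes RD: "real_distribution M" and AC: "absolutely_continuous lborel M"
    and "rF (cdf M) = ereal r"
  shows "cdf M r = 1"
proof -
  have "(cdf M \<longlongrightarrow> cdf M r) (at_right r)"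
    using ac_cdf_isCont[OF RD AC, of r] by (simp add: isCont_def filterlim_at_split)
  moreover have "\<forall>\<^sub>F y in at_right r. cdf M y = 1"
    using eventually_at_right_less[of r] assms(3) cdf_one_right_of_rF[OF RD]
    by (auto elim!: eventually_mono)
  ultimately have "((\<lambda>y. 1) \<longlongrightarrow> cdf M r) (at_right r)"
    by (rule Lim_transform_eventually)
  then show ?thesis
    by (rule tendsto_unique[OF trivial_limit_at_right_real tendsto_const, symmetric])
qed

lemma ac_support_interior_nonempty:
  assumes RD: "real_distribution M" and AC: "absolutely_continuous lborel M"
  obtains v where "lF (cdf M) < ereal v" "ereal v < rF (cdf M)"
proof -
  interpret real_distribution M by (rule RD)
  have "\<forall>\<^sub>F y in at_bot. cdf M y < 1/2"
    using cdf_lim_at_bot by (rule order_tendstoD) simp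
  then obtain a where a: "\<And>y. y \<le> a \<Longrightarrow> cdf M y < 1/2" by (auto simp: eventually_at_bot_linorder)
  have "\<forall>\<^sub>F y in at_top. cdf M y > 3/4"
    using cdf_lim_at_top_prob by (rule order_tendstoD) simp
  then obtain b where b: "\<And>y. y \<ge> b \<Longrightarrow> cdf M y > 3/4" by (auto simp: eventually_at_top_linorder)
  define a' where "a' = min a (b - 1)"
  have "cdf M a' < 1/2" "a' \<le> b" "cdf M b > 3/4" using a b by (auto simp: a'_def)
  moreover have "continuous_on {a'..b} (cdf M)"
    using ac_cdf_isCont[OF RD AC] by (simp add: continuous_at_imp_continuous_on)
  ultimately obtain x0 x1 where x0: "cdf M x0 = 1/2" and x1: "cdf M x1 = 3/4"
    using IVT'[of "cdf M" a' "1/2" b] IVT'[of "cdf M" a' "3/4" b] by force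
  have "x0 < x1"
    using cdf_nondecreasing[of x1 x0] x0 x1 by (cases "x0 < x1") auto
  have "lF (cdf M) \<le> ereal x0" unfolding lF_def by (intro Inf_lower) (use x0 in auto)
  also have "ereal x0 < ereal ((x0 + x1) / 2)" using \<open>x0 < x1\<close> by simp
  finally have left: "lF (cdf M) < ereal ((x0 + x1) / 2)" .
  have "ereal ((x0 + x1) / 2) < ereal x1" using \<open>x0 < x1\<close> by simp
  also have "ereal x1 \<le> rF (cdf M)" unfolding rF_def by (intro Sup_upper) (use x1 in auto)
  finally show ?thesis by (rule that[OF left])
qed

lemma rec_cond_density_next_record:
  assumes "1 \<le> k" and "Rfun F v \<noteq> Rfun F u"
  shows "rec_cond_density F k 1 u v t =
    real k / (Rfun F v - Rfun F u) ^ k * ((Rfun F t - Rfun F u) ^ (k - 1) * deriv (Rfun F) t)"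
proof -
  define \<Delta> where "\<Delta> = Rfun F v - Rfun F u"
  have "\<Delta> \<noteq> 0" using assms(2) by (simp add: \<Delta>_def)
  have fact: "(fact k :: real) = real k * fact (k - 1)" and pow: "\<Delta> ^ k = \<Delta> ^ (k - 1) * \<Delta>"
    using assms(1) by (cases k; simp)+
  have "rec_cond_density F k 1 u v t = fact k / fact (k - 1)
      * ((Rfun F t - Rfun F u) / \<Delta>) ^ (k - 1) * (deriv (Rfun F) t / \<Delta>)"
    unfolding rec_cond_density_def \<Delta>_def by simp
  also have "\<dots> = real k / \<Delta> ^ k * ((Rfun F t - Rfun F u) ^ (k - 1) * deriv (Rfun F) t)"
    unfolding fact pow using \<open>\<Delta> \<noteq> 0\<close> by (simp add: power_divide field_simps)
  finally show ?thesis by (simp add: \<Delta>_def)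
qed

lemma power_product_has_derivative:
  assumes "(R has_real_derivative \<rho>) (at v)" and "(D has_real_derivative D') (at v)" and "1 \<le> k"
  shows "((\<lambda>y. (R y - c) ^ k * D y) has_real_derivative
    (R v - c) ^ (k - 1) * (real k * \<rho> * D v + (R v - c) * D')) (at v)"
proof -
  have pow: "(R v - c) ^ k = (R v - c) ^ (k - 1) * (R v - c)"
    using assms(3) by (metis Suc_diff_1 less_le_trans power_Suc2 zero_less_one)
  show ?thesis
    using DERIV_mult[OF DERIV_power[OF DERIV_diff[OF assms(1) DERIV_const]] assms(2)]
    by (rule DERIV_cong) (simp add: pow algebra_simps)
qed

lemma limit_along_rationals:
  fixes \<phi> :: "real \<Rightarrow> real"
  assumes "(\<phi> \<longlongrightarrow> L) (at_right l)" and "\<forall>\<^sub>F p in at_right l. p \<in> \<rat> \<longrightarrow> \<phi> p = D"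
  shows "D = L"
proof -
  define Fq where "Fq = at l within ({l<..} \<inter> \<rat>)"
  have "l islimpt ({l<..} \<inter> \<rat>)"
  proof (rule islimpt_approachable_real[THEN iffD2], intro allI impI)
    fix e :: real assume "0 < e"
    then obtain q where "q \<in> \<rat>" "l < q" "q < l + e" using Rats_dense_in_real[of l "l + e"] by auto
    then show "\<exists>q\<in>{l<..} \<inter> \<rat>. q \<noteq> l \<and> \<bar>q - l\<bar> < e" by (intro bexI[of _ q]) auto
  qed
  then have "Fq \<noteq> bot" by (simp add: Fq_def trivial_limit_within)
  have "Fq \<le> at_right l" unfolding Fq_def by (rule at_le) auto
  have "\<forall>\<^sub>F p in Fq. p \<in> \<rat> \<longrightarrow> \<phi> p = D"
    using filter_leD[OF \<open>Fq \<le> at_right l\<close> assms(2)] .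
  moreover have "\<forall>\<^sub>F p in Fq. p \<in> \<rat>" by (simp add: Fq_def eventually_at_filter)
  ultimately have "\<forall>\<^sub>F p in Fq. \<phi> p = D" by eventually_elim simp
  with tendsto_mono[OF \<open>Fq \<le> at_right l\<close> assms(1)] have "((\<lambda>p. D) \<longlongrightarrow> L) Fq"
    by (rule Lim_transform_eventually)
  then show ?thesis by (rule tendsto_unique[OF \<open>Fq \<noteq> bot\<close> tendsto_const])
qed

locale record_setting =
  fixes M :: "real measure" and h :: "real \<Rightarrow> real" and k :: nat
  assumes RD: "real_distribution M"
    and AC: "absolutely_continuous lborel M"
    and k1: "1 \<le> k"
    and h_cont: "continuous_on {x. lF (cdf M) \<le> ereal x \<and> ereal x \<le> rF (cdf M)} h"
    and h_deriv: "\<forall>j<k. \<forall>x. lF (cdf M) < ereal x \<and> ereal x < rF (cdf M) \<longrightarrow>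
            ((deriv ^^ j) h has_real_derivative (deriv ^^ Suc j) h x) (at x)"
    and hk_cont: "continuous_on {x. lF (cdf M) < ereal x \<and> ereal x < rF (cdf M)} ((deriv ^^ k) h)"
    and Mk_nonzero: "\<forall>v. lF (cdf M) < ereal v \<and> ereal v < rF (cdf M) \<longrightarrow>
            lF (cdf M) \<noteq> -\<infinity> \<and> Mj h k (real_of_ereal (lF (cdf M))) v \<noteq> 0"
begin

abbreviation "F \<equiv> cdf M"
abbreviation "R \<equiv> Rfun (cdf M)"
abbreviation "l \<equiv> real_of_ereal (lF (cdf M))"
abbreviation "I \<equiv> {x. lF (cdf M) < ereal x \<and> ereal x < rF (cdf M)}"
abbreviation Dh :: "nat \<Rightarrow> real \<Rightarrow> real" where "Dh j \<equiv> (deriv ^^ j) h"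

(* The non-vanishing hypothesis forces the left end point to be finite. *)
lemma lF_eq: "lF F = ereal l"
proof -
  obtain v where "lF F < ereal v" "ereal v < rF F"
    using ac_support_interior_nonempty[OF RD AC] .
  then have "lF F \<noteq> -\<infinity>" "lF F \<noteq> \<infinity>" using Mk_nonzero by auto
  then show ?thesis by (cases "lF F") auto
qed

lemma lF_less_iff [simp]: "lF F < ereal x \<longleftrightarrow> l < x"
  by (subst lF_eq) simp

lemma lF_le_iff [simp]: "lF F \<le> ereal x \<longleftrightarrow> l \<le> x"
  by (subst lF_eq) simp

lemma I_eq: "I = {x. l < x \<and> ereal x < rF F}"
  by simp

lemma open_I: "open I"
proof -
  have "open {x. ereal x < rF F}"
    by (cases "rF F") (simp_all add: open_Collect_less)
  then show ?thesis
    unfolding I_eq Collect_conj_eq by (intro open_Int) (simp_all add: open_Collect_less)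
qed

lemma Icc_subset_I: "u \<in> I \<Longrightarrow> b \<in> I \<Longrightarrow> {u..b} \<subseteq> I"
  by (auto intro: le_less_trans[of _ "ereal b"])

lemma convex_I: "convex I"
  unfolding is_interval_convex_1[symmetric] is_interval_1
proof (intro ballI allI impI)
  fix a b x assume "a \<in> I" "b \<in> I" "a \<le> x \<and> x \<le> b"
  then show "x \<in> I" using Icc_subset_I[of a b] by auto
qed

lemma Dh_deriv: "j < k \<Longrightarrow> x \<in> I \<Longrightarrow> (Dh j has_real_derivative Dh (Suc j) x) (at x)"
  using h_deriv by simp

lemma Mj_eq_dquot_I:
  assumes "l \<le> u" "u < w" "ereal w < rF F" "j \<le> k"
  shows "Mj h j u w = dquot Dh u j w"
proof (rule Mj_eq_dquot[where S="I \<inter> {u<..}"])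
  show "\<forall>i<k. \<forall>x\<in>I \<inter> {u<..}. (Dh i has_real_derivative Dh (Suc i) x) (at x)"
    using Dh_deriv by blast
qed (use assms open_I in \<open>auto simp: I_eq\<close>)

lemma F_pos: "l < x \<Longrightarrow> F x > 0"
  using cdf_pos_right_of_lF[OF RD] by simp

lemma F_less_one: "x \<in> I \<Longrightarrow> F x < 1"
  using cdf_less_one_left_of_rF[OF RD] by simp

lemma R_pos: "x \<in> I \<Longrightarrow> R x > 0"
  using F_pos[of x] F_less_one[of x] by (simp add: Rfun_def I_eq)

lemma R_isCont: "x \<in> I \<Longrightarrow> isCont R x"
  unfolding Rfun_def[abs_def] using F_less_one[of x]
  by (intro continuous_intros ac_cdf_isCont[OF RD AC]) simp

lemma R_tendsto_l: "(R \<longlongrightarrow> 0) (at_right l)"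
proof -
  have "F l = 0" by (rule ac_cdf_at_lF[OF RD AC lF_eq])
  then have "isCont R l"
    unfolding Rfun_def[abs_def] by (intro continuous_intros ac_cdf_isCont[OF RD AC]) simp
  then show ?thesis using \<open>F l = 0\<close> by (simp add: isCont_def filterlim_at_split Rfun_def)
qed

lemma R_has_derivative:
  assumes "x \<in> I" and "(F has_real_derivative d) (at x)"
  shows "(R has_real_derivative d / (1 - F x)) (at x)"
proof -
  have "1 - F x > 0" using F_less_one[OF assms(1)] by simp
  then have "((\<lambda>y. - ln (1 - F y)) has_real_derivative - (1 / (1 - F x) * (0 - d))) (at x)"
    by (intro DERIV_minus DERIV_chain2[OF DERIV_ln_divide] DERIV_diff DERIV_const assms(2))
  then show ?thesis by (simp add: Rfun_def[abs_def])
qed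

lemma h_tendsto_l:
  assumes "v \<in> I"
  shows "(Dh 0 \<longlongrightarrow> Dh 0 l) (at_right l)"
proof -
  have "l < v" using assms by (simp add: I_eq)
  have sub: "{l..v} \<subseteq> {x. lF F \<le> ereal x \<and> ereal x \<le> rF F}"
  proof
    fix x assume x: "x \<in> {l..v}"
    then have "ereal x \<le> ereal v" by simp
    also have "ereal v \<le> rF F" using assms by (simp add: less_imp_le)
    finally show "x \<in> {x. lF F \<le> ereal x \<and> ereal x \<le> rF F}" using x by simp
  qed
  then have "continuous_on {l..v} h" using continuous_on_subset[OF h_cont] by blast
  then have "(h \<longlongrightarrow> h l) (at l within {l..v})"
    using \<open>l < v\<close> by (simp add: continuous_on_def)
  then show ?thesis using \<open>l < v\<close> by (simp add: at_within_Icc_at_right)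
qed

lemma exponential_density:
  assumes c: "c > 0" and F_exp: "\<forall>x. ereal x \<ge> lF F \<longrightarrow> F x = 1 - exp (- c * (x - l))"
    and "l < u" "u < v" "t \<in> {u..v}"
  shows "rec_cond_density F k 1 u v t = real k / (v - u) ^ k * (t - u) ^ (k - 1)"
proof -
  have R_lin: "R x = c * (x - l)" if "l < x" for x
    using F_exp[rule_format, of x] that by (simp add: Rfun_def)
  have dR: "deriv R t = c"
  proof (rule DERIV_imp_deriv, rule has_field_derivative_transform_within_open[where S="{l<..}"])
    show "((\<lambda>x. c * (x - l)) has_real_derivative c) (at t)"
      by (auto intro!: derivative_eq_intros)
  qed (use assms R_lin in auto)
  have "R v \<noteq> R u" using assms by (simp add: R_lin)
  from rec_cond_density_next_record[OF k1 this]
  have "rec_cond_density F k 1 u v t = real k / (c * (v - u)) ^ k * ((c * (t - u)) ^ (k - 1) * c)"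
    using assms by (simp add: R_lin dR right_diff_distrib)
  also have "\<dots> = real k / (v - u) ^ k * (t - u) ^ (k - 1)"
    using c k1 by (cases k) (simp_all add: power_mult_distrib)
  finally show ?thesis .
qed

lemma exponential_implies_regression:
  assumes c: "c > 0" and F_exp: "\<forall>x. ereal x \<ge> lF F \<longrightarrow> F x = 1 - exp (- c * (x - l))"
    and uv: "lF F < ereal u" "u < v" "ereal v < rF F"
  shows "rec_cond_exp F (Dh k) k 1 u v = real k * Mj h (k - 1) u v"
proof -
  have "l < u" using uv by simp
  have "rec_cond_exp F (Dh k) k 1 u v
      = integral {u..v} (\<lambda>t. real k / (v - u) ^ k * (Dh k t * (t - u) ^ (k - 1)))"
    unfolding rec_cond_exp_def
    by (rule integral_cong) (use exponential_density[OF c F_exp \<open>l < u\<close> \<open>u < v\<close>] in simp)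
  also have "\<dots> = real k / (v - u) ^ k * integral {u..v} (\<lambda>t. Dh k t * (t - u) ^ (k - 1))"
    by (rule integral_mult_right)
  also have "integral {u..v} (\<lambda>t. Dh k t * (t - u) ^ (k - 1)) = (v - u) ^ k * dquot Dh u (k - 1) v"
  proof (rule integral_unique, rule integral_power_weight_dquot[OF k1 \<open>u < v\<close>])
    have "ereal u < rF F" using uv(2,3) by (simp add: less_trans[of _ "ereal v"])
    then have "{u..v} \<subseteq> I" using Icc_subset_I[of u v] uv by simp
    then show "(Dh j has_real_derivative Dh (Suc j) x) (at x)" if "j < k" "x \<in> {u..v}" for j x
      using that by (intro Dh_deriv) auto
  qed
  also have "dquot Dh u (k - 1) v = Mj h (k - 1) u v"
    using Mj_eq_dquot_I[of u v "k - 1"] \<open>l < u\<close> uv by simp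
  finally show ?thesis using uv by simp
qed

(* If F is exponential on the support, the support is unbounded to the right,
   since F reaches 1 at a finite right end point. *)
lemma rF_infinite:
  assumes F_exp: "\<And>x. x \<in> I \<Longrightarrow> F x = 1 - exp (- c * (x - l))"
  shows "rF F = \<infinity>"
proof -
  obtain w where "lF F < ereal w" "ereal w < rF F"
    using ac_support_interior_nonempty[OF RD AC] .
  show ?thesis
  proof (cases "rF F")
    case (real r)
    then have "l < r" using \<open>lF F < ereal w\<close> \<open>ereal w < rF F\<close> by simp
    have "(F \<longlongrightarrow> F r) (at_left r)"
      using ac_cdf_isCont[OF RD AC, of r] by (simp add: isCont_def filterlim_at_split)
    moreover have "\<forall>\<^sub>F x in at_left r. F x = 1 - exp (- c * (x - l))"
      using eventually_at_left_real[OF \<open>l < r\<close>] by eventually_elim (simp add: F_exp real)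
    ultimately have "((\<lambda>x. 1 - exp (- c * (x - l))) \<longlongrightarrow> F r) (at_left r)"
      by (rule Lim_transform_eventually)
    moreover have "((\<lambda>x. 1 - exp (- c * (x - l))) \<longlongrightarrow> 1 - exp (- c * (r - l))) (at_left r)"
      by (intro tendsto_intros)
    ultimately have "F r = 1 - exp (- c * (r - l))"
      by (rule tendsto_unique[OF trivial_limit_at_left_real])
    moreover have "F r = 1" by (rule ac_cdf_at_rF[OF RD AC real])
    ultimately show ?thesis by simp
  qed (use \<open>ereal w < rF F\<close> in simp_all)
qed

end

locale regression_setting = record_setting +
  fixes g :: "real \<Rightarrow> real" and N :: "real set"
  assumes g_nonneg: "\<And>x. g x \<ge> 0"
    and g_int: "\<And>a b. a \<le> b \<Longrightarrow> (g has_integral (cdf M b - cdf M a)) {a..b}"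
    and N_null: "negligible N"
    and F_deriv: "\<And>x. x \<notin> N \<Longrightarrow> (cdf M has_real_derivative g x) (at x)"
    and regression: "\<forall>u v. lF (cdf M) < ereal u \<and> u < v \<and> ereal v < rF (cdf M) \<longrightarrow>
            rec_cond_exp (cdf M) ((deriv ^^ k) h) k 1 u v = real k * Mj h (k - 1) u v"
begin

(* The integrand of the conditional expectation, up to the factor k/(R v - R p)^k. *)
definition weight :: "real \<Rightarrow> real \<Rightarrow> real" where
  "weight p t = Dh k t * (R t - R p) ^ (k - 1) * deriv R t"

lemma g_integrable: "g integrable_on {a..b}"
  using g_int[of a b] by (cases "a \<le> b") auto

lemma R_deriv_ae: "x \<in> I \<Longrightarrow> x \<notin> N \<Longrightarrow> deriv R x = g x / (1 - F x)"
  by (intro DERIV_imp_deriv R_has_derivative F_deriv)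

(* The integrand is integrable on compact subintervals of the support: it is a continuous
   function times the integrable density g, almost everywhere. *)
lemma weight_integrable:
  assumes "p \<in> I" "b \<in> I"
  shows "weight p integrable_on {p..b}"
proof -
  have sub: "{p..b} \<subseteq> I" by (rule Icc_subset_I[OF assms])
  define \<phi> where "\<phi> t = Dh k t * (R t - R p) ^ (k - 1) / (1 - F t)" for t
  have "continuous_on {p..b} \<phi>"
    unfolding \<phi>_def using sub F_less_one
    by (intro continuous_intros continuous_on_subset[OF hk_cont] continuous_at_imp_continuous_on
        ballI R_isCont ac_cdf_isCont[OF RD AC]) (auto simp: less_imp_neq)
  then have "\<phi> \<in> borel_measurable (lebesgue_on {p..b})" and "bounded (\<phi> ` {p..b})"
    by (auto intro: continuous_imp_measurable_on_sets_lebesgue compact_imp_bounded compact_continuous_image)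
  moreover have "g absolutely_integrable_on {p..b}"
    using g_integrable g_nonneg by (rule nonnegative_absolutely_integrable_1)
  ultimately have "(\<lambda>t. \<phi> t * g t) absolutely_integrable_on {p..b}"
    by (intro absolutely_integrable_bounded_measurable_product_real) auto
  then have "(\<lambda>t. \<phi> t * g t) integrable_on {p..b}"
    by (simp add: absolutely_integrable_on_def)
  then show ?thesis
  proof (rule integrable_spike[OF _ N_null])
    fix t assume "t \<in> {p..b} - N"
    then show "weight p t = \<phi> t * g t"
      using sub R_deriv_ae[of t] by (auto simp: weight_def \<phi>_def)
  qed
qed

lemma weight_primitive_deriv_ae:
  assumes "p \<in> I" "b \<in> I"
  obtains N' where "negligible N'"
    "\<And>v. v \<in> {p<..<b} - N' \<Longrightarrow>
       ((\<lambda>y. integral {p..y} (weight p)) has_real_derivative weight p v) (at v)"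
proof -
  define w where "w t = (if t \<in> {p..b} then weight p t else 0)" for t
  have "w integrable_on {p..b}"
    by (rule integrable_eq[OF weight_integrable[OF assms]]) (simp add: w_def)
  then have "w integrable_on UNIV"
    by (rule integrable_on_superset) (auto simp: w_def)
  then have "w integrable_on {a..c}" for a c
    by (rule integrable_on_subinterval) simp
  then obtain N' where "negligible N'"
    and N': "\<And>x a. x \<notin> N' \<Longrightarrow> a < x \<Longrightarrow> ((\<lambda>y. integral {a..y} w) has_real_derivative w x) (at x)"
    by (rule integral_has_derivative_ae) blast
  show ?thesis
  proof (rule that[OF \<open>negligible N'\<close>])
    fix v assume v: "v \<in> {p<..<b} - N'"
    then have "((\<lambda>y. integral {p..y} w) has_real_derivative weight p v) (at v)"
      using N'[of v p] by (simp add: w_def)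
    then show "((\<lambda>y. integral {p..y} (weight p)) has_real_derivative weight p v) (at v)"
    proof (rule has_field_derivative_transform_within_open[where S="{p<..<b}"])
      fix y assume "y \<in> {p<..<b}"
      then show "integral {p..y} w = integral {p..y} (weight p)"
        by (intro integral_cong) (auto simp: w_def)
    qed (use v in auto)
  qed
qed

lemma weight_integral:
  assumes "p \<in> I" "v \<in> I" "p < v" "R p \<noteq> R v"
  shows "integral {p..v} (weight p) = (R v - R p) ^ k * Mj h (k - 1) p v"
proof -
  have "Dh k t * rec_cond_density F k 1 p v t = real k / (R v - R p) ^ k * weight p t" for t
    using rec_cond_density_next_record[OF k1, of F v p t] assms(4) by (simp add: weight_def)
  then have "rec_cond_exp F (Dh k) k 1 p v = real k / (R v - R p) ^ k * integral {p..v} (weight p)"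
    unfolding rec_cond_exp_def by (simp add: integral_mult_right)
  moreover have "rec_cond_exp F (Dh k) k 1 p v = real k * Mj h (k - 1) p v"
    using regression assms by simp
  ultimately show ?thesis
    using k1 assms(4) by (simp add: field_simps)
qed

lemma primitive_near:
  assumes "p \<in> I" "v \<in> I" "p < v" "R p < R v"
  shows "\<forall>\<^sub>F y in nhds v. integral {p..y} (weight p) = (R y - R p) ^ k * dquot Dh p (k - 1) y"
proof -
  have "\<forall>\<^sub>F y in nhds v. y \<in> I \<inter> {p<..}"
    using open_I assms by (intro eventually_nhds_in_open) (auto simp: open_Int)
  moreover have "(R \<longlongrightarrow> R v) (nhds v)"
    using R_isCont[OF assms(2)] by (simp add: isCont_def tendsto_at_iff_tendsto_nhds)
  then have "\<forall>\<^sub>F y in nhds v. R p < R y" using assms(4) by (rule order_tendstoD)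
  ultimately show ?thesis
  proof eventually_elim
    case (elim y)
    then have "integral {p..y} (weight p) = (R y - R p) ^ k * Mj h (k - 1) p y"
      using assms(1) by (intro weight_integral) auto
    also have "Mj h (k - 1) p y = dquot Dh p (k - 1) y"
      using elim assms(1) by (intro Mj_eq_dquot_I) auto
    finally show ?case .
  qed
qed

(* Comparing derivatives of both sides at a good point v:
   R'(v) equals the secant slope (R v - R p)/(v - p). *)
lemma hazard_secant:
  assumes p: "p \<in> I" and v: "v \<in> I" "v \<notin> N" and pv: "p < v" and Rpv: "R p < R v"
    and Mk: "dquot Dh p k v \<noteq> 0"
    and prim: "((\<lambda>y. integral {p..y} (weight p)) has_real_derivative weight p v) (at v)"
  shows "deriv R v = (R v - R p) / (v - p)"
proof -
  define \<rho> where "\<rho> = g v / (1 - F v)"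
  define A where "A = (R v - R p) ^ (k - 1)"
  have Rd: "(R has_real_derivative \<rho>) (at v)"
    unfolding \<rho>_def using v by (intro R_has_derivative F_deriv)
  have km: "Suc (k - 1) = k" using k1 by simp
  have "(dquot Dh p (k - 1) has_real_derivative dquot Dh p (Suc (k - 1)) v) (at v)"
    using v pv k1 by (intro dquot_has_derivative Dh_deriv) auto
  then have "((\<lambda>y. (R y - R p) ^ k * dquot Dh p (k - 1) y) has_real_derivative
      A * (real k * \<rho> * dquot Dh p (k - 1) v + (R v - R p) * dquot Dh p k v)) (at v)"
    unfolding A_def km by (rule power_product_has_derivative[OF Rd _ k1])
  then have "((\<lambda>y. integral {p..y} (weight p)) has_real_derivative
      A * (real k * \<rho> * dquot Dh p (k - 1) v + (R v - R p) * dquot Dh p k v)) (at v)"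
    by (rule DERIV_cong_ev[OF refl primitive_near[OF p v(1) pv Rpv] refl, THEN iffD2])
  from DERIV_unique[OF prim this]
  have "A * \<rho> * Dh k v = A * (real k * \<rho> * dquot Dh p (k - 1) v + (R v - R p) * dquot Dh p k v)"
    using DERIV_imp_deriv[OF Rd] by (simp add: weight_def A_def mult_ac)
  also have "Dh k v = (v - p) * dquot Dh p k v + real k * dquot Dh p (k - 1) v"
    using pv k1 by (intro dquot_step) auto
  finally have "(A * dquot Dh p k v) * (\<rho> * (v - p)) = (A * dquot Dh p k v) * (R v - R p)"
    by (simp add: algebra_simps)
  moreover have "A * dquot Dh p k v \<noteq> 0" using Rpv Mk by (simp add: A_def)
  ultimately have "\<rho> * (v - p) = R v - R p" by simp
  then show ?thesis using DERIV_imp_deriv[OF Rd] pv by (simp add: field_simps)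
qed
lemma primitive_deriv_rational:
  obtains N' where "negligible N'"
    "\<And>p q v. p \<in> \<rat> \<Longrightarrow> q \<in> \<rat> \<Longrightarrow> p \<in> I \<Longrightarrow> q \<in> I \<Longrightarrow> v \<in> {p<..<q} - N' \<Longrightarrow>
       ((\<lambda>y. integral {p..y} (weight p)) has_real_derivative weight p v) (at v)"
proof -
  define Q where "Q = {pq \<in> \<rat> \<times> \<rat>. fst pq \<in> I \<and> snd pq \<in> I}"
  define P where "P pq N' \<longleftrightarrow> negligible N' \<and> (\<forall>v \<in> {fst pq<..<snd pq} - N'.
      ((\<lambda>y. integral {fst pq..y} (weight (fst pq))) has_real_derivative weight (fst pq) v) (at v))"
    for pq N'
  have "\<exists>N'. P pq N'" if "pq \<in> Q" for pq
    by (rule weight_primitive_deriv_ae[of "fst pq" "snd pq"]) (use that in \<open>auto simp: Q_def P_def\<close>)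
  then obtain NN where NN: "\<And>pq. pq \<in> Q \<Longrightarrow> P pq (NN pq)" by metis
  have "countable Q"
    by (rule countable_subset[of _ "\<rat> \<times> \<rat>"]) (auto simp: Q_def countable_rat)
  then have "negligible (\<Union> (NN ` Q))"
    using NN by (intro negligible_countable_Union) (auto simp: P_def)
  then show ?thesis
  proof (rule that)
    fix p q v assume "p \<in> \<rat>" "q \<in> \<rat>" "p \<in> I" "q \<in> I" "v \<in> {p<..<q} - \<Union> (NN ` Q)"
    moreover from this have "(p, q) \<in> Q" by (simp add: Q_def)
    ultimately show "((\<lambda>y. integral {p..y} (weight p)) has_real_derivative weight p v) (at v)"
      using NN[of "(p, q)"] by (auto simp: P_def)
  qed
qed

(* At a good point v the secant identity holds for all rational p close to l,
   where M_k(p,v) is nonzero by continuity from M_k(l,v). *)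
lemma secant_slope_near_l:
  assumes v: "v \<in> I" "v \<notin> N"
    and prim: "\<And>p q. p \<in> \<rat> \<Longrightarrow> q \<in> \<rat> \<Longrightarrow> p \<in> I \<Longrightarrow> q \<in> I \<Longrightarrow> v \<in> {p<..<q} \<Longrightarrow>
       ((\<lambda>y. integral {p..y} (weight p)) has_real_derivative weight p v) (at v)"
  shows "\<forall>\<^sub>F p in at_right l. p \<in> \<rat> \<longrightarrow> (R v - R p) / (v - p) = deriv R v"
proof -
  have "l < v" "ereal v < rF F" using v by auto
  obtain w where "ereal v < ereal w" "ereal w < rF F" using ereal_dense2[OF \<open>ereal v < rF F\<close>] by blast
  then obtain q where "q \<in> \<rat>" "v < q" "q < w" using Rats_dense_in_real[of v w] by auto
  then have "q \<in> I" using \<open>l < v\<close> \<open>ereal w < rF F\<close> by (auto intro: less_trans[of _ "ereal w"])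
  have "dquot Dh l k v = Mj h k l v"
    using \<open>l < v\<close> \<open>ereal v < rF F\<close> by (intro Mj_eq_dquot_I[symmetric]) auto
  then have "dquot Dh l k v \<noteq> 0" using Mk_nonzero v by simp
  moreover have "((\<lambda>p. dquot Dh p k v) \<longlongrightarrow> dquot Dh l k v) (at_right l)"
    using dquot_tendsto_left_point[of Dh l v k] h_tendsto_l[OF v(1)] \<open>l < v\<close> by simp
  ultimately have "\<forall>\<^sub>F p in at_right l. dquot Dh p k v \<noteq> 0"
    by (intro tendsto_imp_eventually_ne)
  moreover have "\<forall>\<^sub>F p in at_right l. R p < R v"
    using R_tendsto_l R_pos[OF v(1)] by (rule order_tendstoD)
  moreover have "\<forall>\<^sub>F p in at_right l. p \<in> {l<..<v}"
    using eventually_at_right_real[OF \<open>l < v\<close>] .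
  ultimately show ?thesis
  proof eventually_elim
    case (elim p)
    show ?case
    proof
      assume "p \<in> \<rat>"
      have "p \<in> I" using elim \<open>ereal v < rF F\<close> by (auto intro: less_trans[of _ "ereal v"])
      then show "(R v - R p) / (v - p) = deriv R v"
        using elim v \<open>v < q\<close> \<open>p \<in> \<rat>\<close> \<open>q \<in> \<rat>\<close> \<open>q \<in> I\<close>
        by (intro hazard_secant[symmetric] prim) auto
    qed
  qed
qed

(* Letting p tend to l: R'(v) = R v / (v - l) almost everywhere on the support. *)
lemma hazard_ode_ae:
  obtains N' where "negligible N'" "\<And>v. v \<in> I - N' \<Longrightarrow> deriv R v = R v / (v - l)"
proof -
  obtain N1 where "negligible N1" and N1: "\<And>p q v. p \<in> \<rat> \<Longrightarrow> q \<in> \<rat> \<Longrightarrow> p \<in> I \<Longrightarrow> q \<in> I \<Longrightarrow>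
      v \<in> {p<..<q} - N1 \<Longrightarrow> ((\<lambda>y. integral {p..y} (weight p)) has_real_derivative weight p v) (at v)"
    using primitive_deriv_rational by blast
  show ?thesis
  proof (rule that)
    show "negligible (N \<union> N1)" using N_null \<open>negligible N1\<close> by (rule negligible_Un)
    fix v assume v: "v \<in> I - (N \<union> N1)"
    then have "v \<in> I" "v \<notin> N" by auto
    moreover have "((\<lambda>y. integral {p..y} (weight p)) has_real_derivative weight p v) (at v)"
      if "p \<in> \<rat>" "q \<in> \<rat>" "p \<in> I" "q \<in> I" "v \<in> {p<..<q}" for p q
      using N1[OF that(1-4)] that(5) v by blast
    ultimately have "\<forall>\<^sub>F p in at_right l. p \<in> \<rat> \<longrightarrow> (R v - R p) / (v - p) = deriv R v"
      by (rule secant_slope_near_l)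
    moreover have "((\<lambda>p. (R v - R p) / (v - p)) \<longlongrightarrow> (R v - 0) / (v - l)) (at_right l)"
      using v by (intro tendsto_intros R_tendsto_l) auto
    ultimately show "deriv R v = R v / (v - l)"
      using limit_along_rationals by simp
  qed
qed

(* The density F would have if R'(t) = R t / (t - l) held everywhere. *)
definition hazard_density :: "real \<Rightarrow> real" where
  "hazard_density t = (1 - F t) * (R t / (t - l))"

lemma hazard_density_continuous: "continuous_on I hazard_density"
  unfolding hazard_density_def[abs_def]
  by (intro continuous_intros continuous_at_imp_continuous_on ballI R_isCont ac_cdf_isCont[OF RD AC])
     simp_all

(* It agrees with g almost everywhere, so it integrates to the increments of F. *)
lemma cdf_increment_hazard_density:
  assumes "a \<in> I" "y \<in> I" "a \<le> y"
  shows "(hazard_density has_integral (F y - F a)) {a..y}"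
proof -
  obtain N1 where "negligible N1" and ode: "\<And>t. t \<in> I - N1 \<Longrightarrow> deriv R t = R t / (t - l)"
    using hazard_ode_ae by blast
  show ?thesis
  proof (rule has_integral_spike[OF negligible_Un[OF N_null \<open>negligible N1\<close>] _ g_int[OF assms(3)]])
    fix t assume t: "t \<in> {a..y} - (N \<union> N1)"
    then have "t \<in> I" using Icc_subset_I[OF assms(1,2)] by auto
    then have "g t / (1 - F t) = R t / (t - l)" using R_deriv_ae[of t] ode[of t] t by simp
    moreover have "1 - F t \<noteq> 0" using F_less_one[OF \<open>t \<in> I\<close>] by simp
    ultimately show "hazard_density t = g t" by (simp add: hazard_density_def field_simps)
  qed
qed

lemma F_has_derivative_on_I:
  assumes "v \<in> I"
  shows "(F has_real_derivative hazard_density v) (at v)"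
proof -
  have "l < v" "ereal v < rF F" using assms by auto
  define a where "a = (l + v) / 2"
  obtain w where "ereal v < ereal w" "ereal w < rF F" using ereal_dense2[OF \<open>ereal v < rF F\<close>] by blast
  have "a < v" "v < w" using \<open>l < v\<close> \<open>ereal v < ereal w\<close> by (auto simp: a_def)
  have "ereal a < ereal v" using \<open>a < v\<close> by simp
  then have "ereal a < rF F" using \<open>ereal v < rF F\<close> by (rule less_trans)
  then have "a \<in> I" using \<open>l < v\<close> by (simp add: a_def)
  moreover have "w \<in> I" using \<open>l < v\<close> \<open>v < w\<close> \<open>ereal w < rF F\<close> by simp
  ultimately have sub: "{a..w} \<subseteq> I" by (rule Icc_subset_I)
  have "((\<lambda>y. integral {a..y} hazard_density) has_real_derivative hazard_density v) (at v within {a..w})"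
    using \<open>a < v\<close> \<open>v < w\<close> continuous_on_subset[OF hazard_density_continuous sub]
    by (intro integral_has_real_derivative) auto
  moreover have "at v within {a..w} = at v"
    using \<open>a < v\<close> \<open>v < w\<close> by (intro at_within_interior) auto
  ultimately have "((\<lambda>y. F a + integral {a..y} hazard_density) has_real_derivative hazard_density v) (at v)"
    using DERIV_add[OF DERIV_const] by fastforce
  then show ?thesis
  proof (rule has_field_derivative_transform_within_open[where S="{a<..<w}"])
    fix y assume y: "y \<in> {a<..<w}"
    then have "y \<in> {a..w}" by auto
    then have "y \<in> I" by (rule subsetD[OF sub])
    with y have "(hazard_density has_integral (F y - F a)) {a..y}"
      using \<open>a \<in> I\<close> by (intro cdf_increment_hazard_density) auto
    then show "F a + integral {a..y} hazard_density = F y" by (simp add: integral_unique)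
  qed (use \<open>a < v\<close> \<open>v < w\<close> in auto)
qed

lemma R_hazard_ode:
  assumes "v \<in> I"
  shows "(R has_real_derivative R v / (v - l)) (at v)"
proof -
  have "1 - F v \<noteq> 0" using F_less_one[OF assms] by simp
  then show ?thesis
    using R_has_derivative[OF assms F_has_derivative_on_I[OF assms]] by (simp add: hazard_density_def)
qed

(* R v / (v - l) has zero derivative on the interval I, hence R is linear. *)
lemma R_linear:
  obtains c where "c > 0" "\<And>x. x \<in> I \<Longrightarrow> R x = c * (x - l)"
proof -
  have "((\<lambda>x. R x / (x - l)) has_real_derivative 0) (at v within I)" if v: "v \<in> I" for v
  proof -
    have "l < v" using v by simp
    have "((\<lambda>x. R x / (x - l)) has_real_derivative
        (R v / (v - l) * (v - l) - R v * 1) / ((v - l) * (v - l))) (at v)"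
      by (rule DERIV_divide[OF R_hazard_ode[OF v] DERIV_diff[OF DERIV_ident DERIV_const, simplified]])
         (use \<open>l < v\<close> in simp)
    then have "((\<lambda>x. R x / (x - l)) has_real_derivative 0) (at v)" using \<open>l < v\<close> by simp
    then show ?thesis by (rule has_field_derivative_at_within)
  qed
  then have "\<exists>c. \<forall>x\<in>I. R x / (x - l) = c"
    by (rule has_field_derivative_zero_constant[OF convex_I])
  then obtain c where c: "\<And>x. x \<in> I \<Longrightarrow> R x / (x - l) = c" by blast
  obtain w where "lF F < ereal w" "ereal w < rF F"
    using ac_support_interior_nonempty[OF RD AC] .
  then have "w \<in> I" "l < w" by simp_all
  then have "0 < R w / (w - l)" using R_pos[OF \<open>w \<in> I\<close>] by simp
  then have "c > 0" using c[OF \<open>w \<in> I\<close>] by simp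
  moreover have "R x = c * (x - l)" if "x \<in> I" for x
  proof -
    have "x - l \<noteq> 0" using that by simp
    then show ?thesis using c[OF that] by (simp add: field_simps)
  qed
  ultimately show ?thesis by (rule that)
qed

lemma regression_implies_exponential:
  "lF F > -\<infinity> \<and> rF F = \<infinity> \<and> (\<exists>c>0. \<forall>x. ereal x \<ge> lF F \<longrightarrow> F x = 1 - exp (- c * (x - l)))"
proof -
  obtain c where "c > 0" and R_lin: "\<And>x. x \<in> I \<Longrightarrow> R x = c * (x - l)"
    using R_linear by blast
  have F_exp: "F x = 1 - exp (- c * (x - l))" if "x \<in> I" for x
  proof -
    have "1 - F x > 0" using F_less_one[OF that] by simp
    moreover have "ln (1 - F x) = - c * (x - l)" using R_lin[OF that] by (simp add: Rfun_def)
    ultimately have "1 - F x = exp (- c * (x - l))" by (metis exp_ln)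
    then show ?thesis by simp
  qed
  have rF: "rF F = \<infinity>" by (rule rF_infinite) (rule F_exp)
  have "F x = 1 - exp (- c * (x - l))" if "l \<le> x" for x
  proof (cases "x = l")
    case True
    then show ?thesis using ac_cdf_at_lF[OF RD AC lF_eq] by simp
  next
    case False
    then show ?thesis using that rF by (intro F_exp) simp
  qed
  moreover have "lF F > -\<infinity>" by (subst lF_eq) simp
  ultimately show ?thesis using rF \<open>c > 0\<close> by auto
qed

end

context record_setting
begin

lemma regression_iff_exponential:
  assumes g: "\<And>x. g x \<ge> 0" "\<And>a b. a \<le> b \<Longrightarrow> (g has_integral (F b - F a)) {a..b}"
    and N: "negligible N" "\<And>x. x \<notin> N \<Longrightarrow> (F has_real_derivative g x) (at x)"
  shows "(\<forall>u v. lF F < ereal u \<and> u < v \<and> ereal v < rF F \<longrightarrow>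
            rec_cond_exp F (Dh k) k 1 u v = real k * Mj h (k - 1) u v)
     \<longleftrightarrow> (lF F > -\<infinity> \<and> rF F = \<infinity> \<and> (\<exists>c>0. \<forall>x. ereal x \<ge> lF F \<longrightarrow> F x = 1 - exp (- c * (x - l))))"
    (is "?regression \<longleftrightarrow> ?exponential")
proof
  assume ?regression
  with g N interpret regression_setting M h k g N
    by (intro regression_setting.intro regression_setting_axioms.intro record_setting_axioms)
  show ?exponential by (rule regression_implies_exponential)
next
  assume ?exponential
  then obtain c where "c > 0" "\<forall>x. ereal x \<ge> lF F \<longrightarrow> F x = 1 - exp (- c * (x - l))" by blast
  then show ?regression using exponential_implies_regression by blast
qed

end

(* The characterisation: interpret the setting and supply a density of F; the record
   index n enters only through 1 <= k. *)
theorem mainTheorem1: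
  fixes M :: "real measure" and h :: "real \<Rightarrow> real" and n k :: nat
  assumes "real_distribution M"
    and "absolutely_continuous lborel M"
    and "n \<ge> 2" and "1 \<le> k" and "k \<le> n - 1"
    and "continuous_on {x. lF (cdf M) \<le> ereal x \<and> ereal x \<le> rF (cdf M)} h"
    and "\<forall>j<k. \<forall>x. lF (cdf M) < ereal x \<and> ereal x < rF (cdf M) \<longrightarrow>
            ((deriv ^^ j) h has_real_derivative (deriv ^^ Suc j) h x) (at x)"
    and "continuous_on {x. lF (cdf M) < ereal x \<and> ereal x < rF (cdf M)} ((deriv ^^ k) h)"
    and "\<forall>v. lF (cdf M) < ereal v \<and> ereal v < rF (cdf M) \<longrightarrow>
            lF (cdf M) \<noteq> -\<infinity> \<and> Mj h k (real_of_ereal (lF (cdf M))) v \<noteq> 0"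
  shows "(\<forall>u v. lF (cdf M) < ereal u \<and> u < v \<and> ereal v < rF (cdf M) \<longrightarrow>
            rec_cond_exp (cdf M) ((deriv ^^ k) h) k 1 u v = real k * Mj h (k - 1) u v)
     \<longleftrightarrow> (lF (cdf M) > -\<infinity> \<and> rF (cdf M) = \<infinity> \<and>
          (\<exists>c>0. \<forall>x. ereal x \<ge> lF (cdf M) \<longrightarrow>
              cdf M x = 1 - exp (- c * (x - real_of_ereal (lF (cdf M))))))"
proof -
  interpret record_setting M h k
    using assms(1,2,4,6-9) by (rule record_setting.intro)
  obtain g where g: "\<And>x. g x \<ge> 0" "\<And>a b. a \<le> b \<Longrightarrow> (g has_integral (cdf M b - cdf M a)) {a..b}"
    using ac_cdf_has_density[OF assms(1,2)] by blast
  obtain N where N: "negligible N" "\<And>x. x \<notin> N \<Longrightarrow> (cdf M has_real_derivative g x) (at x)"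
    using cdf_has_derivative_ae[OF g(2)] by blast
  show ?thesis by (rule regression_iff_exponential[OF g N])
qed

end
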